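(* Let $\mathbb X,\mathbb Y$ be Euclidean spaces, $g\colon\mathbb X\to\mathbb Y$ twice continuously differentiable, $D\subset\mathbb Y$ closed, $\Phi(x):=g(x)-D$, $(\bar x,0)\in\operatorname{gph}\Phi$, $u\in\mathbb S_{\mathbb X}$. Assume: (Q1) for all $y^*,z^*$: [$\nabla g(\bar x)^*y^*=0$, $\nabla^2\langle y^*,g\rangle(\bar x)(u)+\nabla g(\bar x)^*z^*=0$, $y^*\in\mathcal N_D(g(\bar x);\nabla g(\bar x)u)$, $z^*\in D\mathcal N_D(g(\bar x),y^* )(\nabla g(\bar x)u)$] implies $y^*=0$; and either (Q2): for all $y^*,\hat z^*$: [$\nabla g(\bar x)^*y^*=0$, $\nabla g(\bar x)^*\hat z^*=0$, $y^*\in\mathcal N_D(g(\bar x);\nabla g(\bar x)u)$, $\hat z^*\in D\mathcal N_D(g(\bar x),y^* )(0)$] implies $\hat z^*=0$; or (Q3): $\nabla g(\bar x)u\ne0$ and for all $y^*,\hat z^*$: [$\nabla g(\bar x)^*y^*=0$, $\nabla g(\bar x)^*\hat z^*=0$, $y^*\in\mathcal N_D(g(\bar x);\nabla g(\bar x)u)$] implies $\hat z^*\notin D_{\mathrm{sub}}\mathcal N_D(g(\bar x),y^* )(\nabla g(\bar x)u/\|\nabla g(\bar x)u\|)$. If for each $x^*\in\mathbb X$ and $y^*,z^*\in\mathbb Y$ satisfying $x^*=\nabla^2\langle y^*,g\rangle(\bar x)(u)+\nabla g(\bar x)^*z^*$, $y^*\in\mathcal N_D(g(\bar x);\nabla g(\bar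 x)u)\cap\ker\nabla g(\bar x)^*$, $z^*\in D\mathcal N_D(g(\bar x),y^* )(\nabla g(\bar x)u)$, there is $\lambda\in\mathcal N_D(g(\bar x))$ with $x^*=\nabla g(\bar x)^*\lambda$, then $\Phi$ is asymptotically regular at $(\bar x,0)$ in direction $u$. Moreover, $\Phi$ is strongly asymptotically regular at $(\bar x,0)$ in direction $u$ if such $\lambda$ can always be chosen from $\mathcal N_D(g(\bar x);\nabla g(\bar x)u)$.
   Context: $\nabla^2\langle y^*,g\rangle(\bar x)(u)\in\mathbb X$ is the Hessian of $x\mapsto\langle y^*,g(x)\rangle$ applied to $u$. $\mathcal N_D$ is the limiting normal cone; $\mathcal N_D(y;w)$ the directional limiting normal cone (all $\eta$ with $w_k\to w$, $t_k\downarrow0$, $\eta_k\to\eta$, $\eta_k\in\widehat{\mathcal N}_D(y+t_kw_k)$). $D\mathcal N_D(\bar y,\bar y^* )$ is the graphical derivative (graph $=\mathcal T_{\operatorname{gph}\mathcal N_D}(\bar y,\bar y^* )$); $D_{\mathrm{sub}}\mathcal N_D(\bar y,\bar y^* )(w)$, $w\in\mathbb S_{\mathbb Y}$, is the set of $q\in\mathbb S_{\mathbb Y}$ with $w_k\to w$, $q_k\to q$, $t_k,\tau_k\downarrow0$, $\tau_k/t_k\to\infty$, $\bar y^*+\tau_kq_k\in\mathcal N_D(\bar y+t_kw_k)$. Asymptotic regularity in direction $u$ at $(\bar x,0)$: for all $(x_k,y_k)\in\operatorname{gph}\Phi$, $x_k^*$, $\lambda_k$, $x^*$, $y^*$ with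 $x_k\notin\Phi^{-1}(0)$, $y_k\ne0$, $x_k^*\in\widehat D^*\Phi(x_k,y_k)(\lambda_k)$ and $x_k\to\bar x$, $y_k\to0$, $x_k^*\to x^*$, $\frac{x_k-\bar x}{\|x_k-\bar x\|}\to u$, $\frac{y_k}{\|x_k-\bar x\|}\to0$, $\frac{\|y_k\|}{\|x_k-\bar x\|}\lambda_k\to y^*$, $\|\lambda_k\|\to\infty$, $\frac{y_k}{\|y_k\|}-\frac{\lambda_k}{\|\lambda_k\|}\to0$, one has $x^*\in\operatorname{Im}D^*\Phi(\bar x,0)$; strong asymptotic regularity requires $x^*\in\operatorname{Im}D^*\Phi((\bar x,0);(u,0))$ instead. Here $\widehat D^*\Phi(x,y)(y^* )=\{x^*\mid(x^*,-y^* )\in\widehat{\mathcal N}_{\operatorname{gph}\Phi}(x,y)\}$, $D^*$ with the limiting normal cone, $D^*\Phi((\bar x,0);(u,0))$ with the directional limiting normal cone to $\operatorname{gph}\Phi$, and $\operatorname{Im}\Psi=\bigcup\Psi(y^* )$. *)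

theory Defs
  imports "HOL-Analysis.Analysis"
begin

definition reg_normal :: "'a::real_inner set \<Rightarrow> 'a \<Rightarrow> 'a set" where
  "reg_normal C z = {\<eta>. z \<in> C \<and>
     (\<forall>\<epsilon>>0. \<exists>\<delta>>0. \<forall>z'\<in>C. norm (z' - z) < \<delta> \<longrightarrow> \<eta> \<bullet> (z' - z) \<le> \<epsilon> * norm (z' - z))}"

definition lim_normal :: "'a::real_inner set \<Rightarrow> 'a \<Rightarrow> 'a set" where
  "lim_normal C z = {\<eta>. \<exists>zk \<eta>k. (zk \<longlonglongrightarrow> z) \<and> (\<eta>k \<longlonglongrightarrow> \<eta>) \<and>
     (\<forall>k. zk k \<in> C \<and> \<eta>k k \<in> reg_normal C (zk k))}"

definition dir_normal :: "'a::real_inner set \<Rightarrow> 'a \<Rightarrow> 'a \<Rightarrow> 'a set" where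
  "dir_normal C z w = {\<eta>. \<exists>tk wk \<eta>k. (\<forall>k. tk k > 0) \<and> (tk \<longlonglongrightarrow> 0) \<and>
     (wk \<longlonglongrightarrow> w) \<and> (\<eta>k \<longlonglongrightarrow> \<eta>) \<and> (\<forall>k. \<eta>k k \<in> reg_normal C (z + tk k *\<^sub>R wk k))}"

definition tangent_cone :: "'a::real_normed_vector set \<Rightarrow> 'a \<Rightarrow> 'a set" where
  "tangent_cone C z = {v. \<exists>tk vk. (\<forall>k. tk k > 0) \<and> (tk \<longlonglongrightarrow> 0) \<and>
     (vk \<longlonglongrightarrow> v) \<and> (\<forall>k. z + tk k *\<^sub>R vk k \<in> C)}"

definition gph_normal :: "'a::real_inner set \<Rightarrow> ('a \<times> 'a) set" where
  "gph_normal D = {(y, \<eta>). \<eta> \<in> lim_normal D y}"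

definition graph_deriv_normal :: "'a::real_inner set \<Rightarrow> 'a \<Rightarrow> 'a \<Rightarrow> 'a \<Rightarrow> 'a set" where
  "graph_deriv_normal D y ys w = {q. (w, q) \<in> tangent_cone (gph_normal D) (y, ys)}"

definition Dsub_normal :: "'a::real_inner set \<Rightarrow> 'a \<Rightarrow> 'a \<Rightarrow> 'a \<Rightarrow> 'a set" where
  "Dsub_normal D y ys w = {q. norm q = 1 \<and>
     (\<exists>wk qk tk \<tau>k. (wk \<longlonglongrightarrow> w) \<and> (qk \<longlonglongrightarrow> q) \<and>
        (\<forall>k. tk k > 0 \<and> \<tau>k k > 0) \<and> (tk \<longlonglongrightarrow> 0) \<and> (\<tau>k \<longlonglongrightarrow> 0) \<and>
        filterlim (\<lambda>k. \<tau>k k / tk k) at_top sequentially \<and>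
        (\<forall>k. ys + \<tau>k k *\<^sub>R qk k \<in> lim_normal D (y + tk k *\<^sub>R wk k)))}"

definition gph_Phi :: "('a \<Rightarrow> 'b::real_normed_vector) \<Rightarrow> 'b set \<Rightarrow> ('a \<times> 'b) set" where
  "gph_Phi g D = {(x, y). g x - y \<in> D}"

definition reg_coderiv :: "('a::real_inner \<times> 'b::real_inner) set \<Rightarrow> 'a \<Rightarrow> 'b \<Rightarrow> 'b \<Rightarrow> 'a set" where
  "reg_coderiv G x y ys = {xs. (xs, - ys) \<in> reg_normal G (x, y)}"

definition lim_coderiv :: "('a::real_inner \<times> 'b::real_inner) set \<Rightarrow> 'a \<Rightarrow> 'b \<Rightarrow> 'b \<Rightarrow> 'a set" where
  "lim_coderiv G x y ys = {xs. (xs, - ys) \<in> lim_normal G (x, y)}"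

definition dir_coderiv :: "('a::real_inner \<times> 'b::real_inner) set \<Rightarrow> 'a \<Rightarrow> 'b \<Rightarrow> 'a \<Rightarrow> 'b \<Rightarrow> 'b \<Rightarrow> 'a set" where
  "dir_coderiv G x y u v ys = {xs. (xs, - ys) \<in> dir_normal G (x, y) (u, v)}"

text \<open>Premises of (strong) asymptotic regularity in direction \<open>u\<close> at \<open>(xb,0)\<close>.\<close>
definition asym_seq :: "('a::real_inner \<times> 'b::real_inner) set \<Rightarrow> 'a \<Rightarrow> 'a \<Rightarrow>
    (nat \<Rightarrow> 'a) \<Rightarrow> (nat \<Rightarrow> 'b) \<Rightarrow> (nat \<Rightarrow> 'a) \<Rightarrow> (nat \<Rightarrow> 'b) \<Rightarrow> 'a \<Rightarrow> 'b \<Rightarrow> bool" where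
  "asym_seq G xb u xk yk xsk lk xs ys \<longleftrightarrow>
     (\<forall>k. (xk k, yk k) \<in> G \<and> (xk k, 0) \<notin> G \<and> yk k \<noteq> 0 \<and>
          xsk k \<in> reg_coderiv G (xk k) (yk k) (lk k)) \<and>
     (xk \<longlonglongrightarrow> xb) \<and> (yk \<longlonglongrightarrow> 0) \<and> (xsk \<longlonglongrightarrow> xs) \<and>
     ((\<lambda>k. (1 / norm (xk k - xb)) *\<^sub>R (xk k - xb)) \<longlonglongrightarrow> u) \<and>
     ((\<lambda>k. (1 / norm (xk k - xb)) *\<^sub>R yk k) \<longlonglongrightarrow> 0) \<and>
     ((\<lambda>k. (norm (yk k) / norm (xk k - xb)) *\<^sub>R lk k) \<longlonglongrightarrow> ys) \<and>
     filterlim (\<lambda>k. norm (lk k)) at_top sequentially \<and>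
     ((\<lambda>k. (1 / norm (yk k)) *\<^sub>R yk k - (1 / norm (lk k)) *\<^sub>R lk k) \<longlonglongrightarrow> 0)"

definition asym_regular :: "('a::real_inner \<times> 'b::real_inner) set \<Rightarrow> 'a \<Rightarrow> 'a \<Rightarrow> bool" where
  "asym_regular G xb u \<longleftrightarrow> (\<forall>xk yk xsk lk xs ys. asym_seq G xb u xk yk xsk lk xs ys \<longrightarrow>
      xs \<in> (\<Union>ys'. lim_coderiv G xb 0 ys'))"

definition strong_asym_regular :: "('a::real_inner \<times> 'b::real_inner) set \<Rightarrow> 'a \<Rightarrow> 'a \<Rightarrow> bool" where
  "strong_asym_regular G xb u \<longleftrightarrow> (\<forall>xk yk xsk lk xs ys. asym_seq G xb u xk yk xsk lk xs ys \<longrightarrow>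
      xs \<in> (\<Union>ys'. dir_coderiv G xb 0 u 0 ys'))"

end

(*
  Let x_k, y_k, lambda_k and x_k^* = Dg(x_k)^* lambda_k be as in the definition of asymptotic
  regularity, and t_k = |x_k - xb|. Rescale the multipliers to mu_k = c_k lambda_k with
  c_k = min t_k (1/|lambda_k|), so that |mu_k| <= 1 and theta_k = c_k/t_k lies in [0,1], and pass
  to a subsequence with mu_k -> eta and theta_k -> theta. Since
    (1/t_k) Dg(xb)^* mu_k = theta_k x_k^* - ((Dg(x_k) - Dg(xb))/t_k)^* mu_k
  and the last difference quotient tends to D^2g(xb) u, the left-hand side converges to
  v = theta x^* - D^2<eta,g>(xb) u. Hence Dg(xb)^* eta = 0, and eta is a directional normal to D.
  The quotients (mu_k - eta)/t_k either have a convergent subsequence, whose limit z lies in the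
  graphical derivative of N_D and satisfies Dg(xb)^* z = v, or they blow up in a unit direction
  in the kernel of Dg(xb)^*, which is excluded by (Q2), resp. by (Q3).
  If theta > 0, dividing by theta represents x^* as in the hypothesis of the theorem, so
  x^* = Dg(xb)^* lambda, and (Dg(xb)^* lambda, -lambda) is a (directional) limiting normal to the
  graph of Phi at (xb, 0). If theta = 0, then |eta| = 1, while (Q1) forces eta = 0.
*)
theory Submission
  imports Defs
begin

section \<open>Adjoints of bounded linear maps\<close>

abbreviation blinfun_adjoint :: "('a::euclidean_space \<Rightarrow>\<^sub>L 'b::euclidean_space) \<Rightarrow> 'b \<Rightarrow> 'a"
  where "blinfun_adjoint F \<equiv> adjoint (blinfun_apply F)"

lemma inner_blinfun_adjoint: "x \<bullet> blinfun_adjoint F y = F x \<bullet> y"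
  by (simp add: adjoint_works bounded_linear.linear blinfun.bounded_linear_right)

lemma blinfun_adjoint_eqI:
  fixes F :: "'a::euclidean_space \<Rightarrow>\<^sub>L 'b::euclidean_space"
  assumes "\<And>x. x \<bullet> v = F x \<bullet> y"
  shows "blinfun_adjoint F y = v"
proof -
  have "\<forall>x. x \<bullet> blinfun_adjoint F y = x \<bullet> v"
    by (simp add: inner_blinfun_adjoint assms)
  then show ?thesis
    by (simp add: vector_eq_ldot)
qed

lemma norm_blinfun_adjoint_le: "norm (blinfun_adjoint F y) \<le> norm F * norm y"
proof -
  define a where "a = blinfun_adjoint F y"
  have "norm a ^ 2 = F a \<bullet> y"
    by (simp add: a_def inner_blinfun_adjoint power2_norm_eq_inner)
  also have "\<dots> \<le> norm (F a) * norm y"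
    by (meson Cauchy_Schwarz_ineq2 abs_le_D1)
  also have "\<dots> \<le> norm F * norm a * norm y"
    by (simp add: mult_right_mono norm_blinfun)
  finally have le: "norm a * norm a \<le> (norm F * norm y) * norm a"
    by (simp add: power2_eq_square algebra_simps)
  show ?thesis
  proof (cases "a = 0")
    case False
    then show ?thesis
      using mult_right_le_imp_le[OF le] by (simp add: a_def)
  qed (simp add: a_def)
qed

interpretation blinfun_adjoint: bounded_bilinear blinfun_adjoint
proof
  fix F F' :: "'a::euclidean_space \<Rightarrow>\<^sub>L 'b::euclidean_space" and y y' :: 'b and r :: real
  show "blinfun_adjoint (F + F') y = blinfun_adjoint F y + blinfun_adjoint F' y"
    by (rule blinfun_adjoint_eqI)
      (simp add: inner_blinfun_adjoint inner_add_right blinfun.add_left inner_add_left)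
  show "blinfun_adjoint F (y + y') = blinfun_adjoint F y + blinfun_adjoint F y'"
    by (rule blinfun_adjoint_eqI) (simp add: inner_blinfun_adjoint inner_add_right inner_add_left)
  show "blinfun_adjoint (r *\<^sub>R F) y = r *\<^sub>R blinfun_adjoint F y"
    by (rule blinfun_adjoint_eqI) (simp add: inner_blinfun_adjoint blinfun.scaleR_left)
  show "blinfun_adjoint F (r *\<^sub>R y) = r *\<^sub>R blinfun_adjoint F y"
    by (rule blinfun_adjoint_eqI) (simp add: inner_blinfun_adjoint)
  show "\<exists>K. \<forall>F y. norm (blinfun_adjoint (F :: 'a \<Rightarrow>\<^sub>L 'b) y) \<le> norm F * norm y * K"
    by (intro exI[of _ 1]) (simp add: norm_blinfun_adjoint_le)
qed

lemma has_derivative_eventually_remainder_le: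
  assumes f: "(f has_derivative f') (at x)" and "e > 0"
  shows "\<forall>\<^sub>F y in nhds x. norm (f y - f x - f' (y - x)) \<le> e * norm (y - x)"
proof -
  interpret f': bounded_linear f'
    using f by (rule has_derivative_bounded_linear)
  have "\<forall>\<^sub>F y in at x. norm (f y - f x - f' (y - x)) \<le> e * norm (y - x)"
    using f \<open>e > 0\<close> unfolding has_derivative_within_alt2 by blast
  then show ?thesis
    by (simp add: eventually_nhds_conv_at f'.zero)
qed

lemma has_derivative_eventually_norm_diff_le:
  assumes f: "(f has_derivative f') (at x)"
  obtains K where "K > 0" and "\<forall>\<^sub>F y in nhds x. norm (f y - f x) \<le> K * norm (y - x)"
proof -
  interpret f': bounded_linear f'
    using f by (rule has_derivative_bounded_linear)
  obtain B where "B > 0" and B: "\<And>h. norm (f' h) \<le> norm h * B"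
    using f'.pos_bounded by blast
  have "\<forall>\<^sub>F y in nhds x. norm (f y - f x) \<le> (B + 1) * norm (y - x)"
    using has_derivative_eventually_remainder_le[OF f zero_less_one]
  proof eventually_elim
    case (elim y)
    have "norm (f y - f x) \<le> norm (f' (y - x)) + norm (f y - f x - f' (y - x))"
      by (metis add_diff_cancel_left' diff_add_cancel norm_triangle_ineq)
    also have "\<dots> \<le> (B + 1) * norm (y - x)"
      using B[of "y - x"] elim by (simp add: algebra_simps)
    finally show ?case .
  qed
  moreover have "B + 1 > 0"
    using \<open>B > 0\<close> by simp
  ultimately show thesis
    using that by blast
qed

lemma tendsto_difference_quotient:
  assumes f: "(f has_derivative f') (at x)"
    and t: "\<And>k. t k \<noteq> 0" "t \<longlonglongrightarrow> 0" and v: "v \<longlonglongrightarrow> v0"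
  shows "(\<lambda>k. (1 / t k) *\<^sub>R (f (x + t k *\<^sub>R v k) - f x)) \<longlonglongrightarrow> f' v0"
proof -
  interpret f': bounded_linear f'
    using f by (rule has_derivative_bounded_linear)
  obtain B where "B > 0" and B: "\<And>k. norm (v k) \<le> B"
    using convergent_imp_Bseq[OF convergentI[OF v]] by (auto elim: BseqE)
  define R where "R k = (1 / t k) *\<^sub>R (f (x + t k *\<^sub>R v k) - f x - f' (t k *\<^sub>R v k))" for k
  have "R \<longlonglongrightarrow> 0"
  proof (rule tendstoI)
    fix e :: real assume "e > 0"
    with \<open>B > 0\<close> have "e / (2 * B) > 0"
      by simp
    then have "\<forall>\<^sub>F y in nhds x. norm (f y - f x - f' (y - x)) \<le> e / (2 * B) * norm (y - x)"
      by (rule has_derivative_eventually_remainder_le[OF f])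
    moreover have "(\<lambda>k. x + t k *\<^sub>R v k) \<longlonglongrightarrow> x"
      using tendsto_add[OF tendsto_const tendsto_scaleR[OF t(2) v]] by simp
    ultimately have "\<forall>\<^sub>F k in sequentially.
        norm (f (x + t k *\<^sub>R v k) - f x - f' ((x + t k *\<^sub>R v k) - x))
          \<le> e / (2 * B) * norm ((x + t k *\<^sub>R v k) - x)"
      by (rule eventually_compose_filterlim)
    then show "\<forall>\<^sub>F k in sequentially. dist (R k) 0 < e"
    proof eventually_elim
      case (elim k)
      have "norm (R k) = norm (f (x + t k *\<^sub>R v k) - f x - f' (t k *\<^sub>R v k)) / \<bar>t k\<bar>"
        by (simp add: R_def)
      also have "\<dots> \<le> e / (2 * B) * (\<bar>t k\<bar> * norm (v k)) / \<bar>t k\<bar>"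
        using elim by (intro divide_right_mono) simp_all
      also have "\<dots> = e / (2 * B) * norm (v k)"
        using t(1)[of k] by simp
      also have "\<dots> \<le> e / (2 * B) * B"
        using B[of k] \<open>e > 0\<close> \<open>B > 0\<close> by (intro mult_left_mono) auto
      also have "\<dots> < e"
        using \<open>e > 0\<close> \<open>B > 0\<close> by simp
      finally show ?case by simp
    qed
  qed
  moreover have "(1 / t k) *\<^sub>R (f (x + t k *\<^sub>R v k) - f x) = R k + f' (v k)" for k
    using t(1)[of k] by (simp add: R_def f'.scaleR algebra_simps)
  ultimately show ?thesis
    using tendsto_add[OF _ f'.tendsto[OF v]] by fastforce
qed

lemma convergent_subseq_Pair:
  fixes f :: "nat \<Rightarrow> 'a::heine_borel" and g :: "nat \<Rightarrow> 'b::heine_borel"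
  assumes "bounded (range f)" and "bounded (range g)"
  obtains r a b where "strict_mono r" "(\<lambda>k. f (r k)) \<longlonglongrightarrow> a" "(\<lambda>k. g (r k)) \<longlonglongrightarrow> b"
proof -
  have "bounded (range (\<lambda>k. (f k, g k)))"
    by (rule bounded_subset[OF bounded_Times[OF assms]]) auto
  then obtain r l where "strict_mono r" and lim: "((\<lambda>k. (f k, g k)) \<circ> r) \<longlonglongrightarrow> l"
    using bounded_imp_convergent_subsequence by blast
  moreover have "(\<lambda>k. f (r k)) \<longlonglongrightarrow> fst l" and "(\<lambda>k. g (r k)) \<longlonglongrightarrow> snd l"
    using tendsto_fst[OF lim] tendsto_snd[OF lim] by (simp_all add: o_def)
  ultimately show thesis
    using that by blast
qed

lemma convergent_or_unbounded_subseq: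
  fixes z :: "nat \<Rightarrow> 'a::euclidean_space"
  obtains r Z where "strict_mono r" "(\<lambda>k. z (r k)) \<longlonglongrightarrow> Z"
  | r \<zeta> where "strict_mono r" "filterlim (\<lambda>k. norm (z (r k))) at_top sequentially"
      "(\<lambda>k. sgn (z (r k))) \<longlonglongrightarrow> \<zeta>" "norm \<zeta> = 1"
proof -
  define s where "s k = 1 / (1 + norm (z k))" for k
  have s: "0 < s k \<and> s k \<le> 1" for k
    by (simp add: s_def add_pos_nonneg)
  then have "bounded (range (\<lambda>k. sgn (z k)))" and "bounded (range s)"
    unfolding bounded_iff by (auto simp: norm_sgn s abs_of_pos intro!: exI[of _ 1])
  then obtain r \<zeta> s0 where r: "strict_mono r"
    and \<zeta>: "(\<lambda>k. sgn (z (r k))) \<longlonglongrightarrow> \<zeta>" and s0: "(\<lambda>k. s (r k)) \<longlonglongrightarrow> s0"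
    by (rule convergent_subseq_Pair)
  have "s0 \<ge> 0"
    using s by (intro LIMSEQ_le_const[OF s0]) (auto simp: less_imp_le)
  show thesis
  proof (cases "s0 = 0")
    case False
    with \<open>s0 \<ge> 0\<close> have "(\<lambda>k. (1 / s (r k) - 1) *\<^sub>R sgn (z (r k))) \<longlonglongrightarrow> (1 / s0 - 1) *\<^sub>R \<zeta>"
      by (intro tendsto_intros s0 \<zeta>) simp
    moreover have "(1 / s k - 1) *\<^sub>R sgn (z k) = z k" for k
      by (cases "z k = 0") (simp_all add: s_def sgn_div_norm)
    ultimately show thesis
      using that(1)[OF r] by simp
  next
    case True
    have "filterlim (\<lambda>k. inverse (s (r k))) at_top sequentially"
      using s0 True s by (intro filterlim_inverse_at_top) auto
    then have "filterlim (\<lambda>k. -1 + inverse (s (r k))) at_top sequentially"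
      by (rule filterlim_tendsto_add_at_top[OF tendsto_const])
    then have big: "filterlim (\<lambda>k. norm (z (r k))) at_top sequentially"
      by (simp add: s_def)
    then have "\<forall>\<^sub>F k in sequentially. norm (sgn (z (r k))) = 1"
      unfolding filterlim_at_top_dense
      by (auto elim!: eventually_mono[OF spec[of _ 0]] simp: norm_sgn)
    then have "norm \<zeta> = 1"
      using LIMSEQ_unique[OF tendsto_norm[OF \<zeta>] tendsto_eventually] by blast
    with r big \<zeta> show thesis
      by (rule that(2))
  qed
qed

lemma bounded_linear_sgn_limit_eq_0:
  assumes L: "bounded_linear L" and Lq: "(\<lambda>k. L (q k)) \<longlonglongrightarrow> v"
    and big: "filterlim (\<lambda>k. norm (q k)) at_top sequentially" and \<zeta>: "(\<lambda>k. sgn (q k)) \<longlonglongrightarrow> \<zeta>"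
  shows "L \<zeta> = 0"
proof -
  interpret L: bounded_linear L by (fact L)
  have "(\<lambda>k. inverse (norm (q k)) *\<^sub>R L (q k)) \<longlonglongrightarrow> 0 *\<^sub>R v"
    using tendsto_inverse_0_at_top[OF big] Lq by (rule tendsto_scaleR)
  then have "(\<lambda>k. L (sgn (q k))) \<longlonglongrightarrow> 0"
    by (simp add: sgn_div_norm L.scaleR divide_inverse_commute)
  then show ?thesis
    using LIMSEQ_unique[OF L.tendsto[OF \<zeta>]] by blast
qed

section \<open>Normal cones\<close>

lemma reg_normal_iff_eventually:
  "\<eta> \<in> reg_normal C z \<longleftrightarrow>
     z \<in> C \<and> (\<forall>e>0. \<forall>\<^sub>F z' in nhds z. z' \<in> C \<longrightarrow> \<eta> \<bullet> (z' - z) \<le> e * norm (z' - z))"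
  unfolding reg_normal_def eventually_nhds_metric dist_norm by blast

lemma reg_normal_eventually_le:
  "\<eta> \<in> reg_normal C z \<Longrightarrow> e > 0 \<Longrightarrow>
     \<forall>\<^sub>F z' in nhds z. z' \<in> C \<longrightarrow> \<eta> \<bullet> (z' - z) \<le> e * norm (z' - z)"
  by (simp add: reg_normal_iff_eventually)

lemma reg_normal_imp_mem: "\<eta> \<in> reg_normal C z \<Longrightarrow> z \<in> C"
  unfolding reg_normal_def by blast

lemma inner_eq_0_if_eventually_le:
  fixes a :: "'a::real_inner"
  assumes "\<And>e. e > 0 \<Longrightarrow> \<forall>\<^sub>F x' in nhds x. a \<bullet> (x' - x) \<le> e * norm (x' - x)"
  shows "a = 0"
proof (rule ccontr)
  assume "a \<noteq> 0"
  then have a: "norm a > 0" by simp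
  have "((\<lambda>s. x + s *\<^sub>R a) \<longlongrightarrow> x) (at_right 0)"
    by (auto intro!: tendsto_eq_intros)
  then have "\<forall>\<^sub>F s in at_right 0. a \<bullet> (s *\<^sub>R a) \<le> norm a / 2 * norm (s *\<^sub>R a)"
    using assms[of "norm a / 2"] a by (auto simp: filterlim_iff)
  moreover have "\<forall>\<^sub>F s in at_right (0::real). 0 < s"
    by (rule eventually_at_right_less)
  ultimately have "\<forall>\<^sub>F s in at_right 0. a \<bullet> (s *\<^sub>R a) \<le> norm a / 2 * norm (s *\<^sub>R a) \<and> 0 < s"
    by (rule eventually_conj)
  then obtain s :: real where "s > 0" "a \<bullet> (s *\<^sub>R a) \<le> norm a / 2 * norm (s *\<^sub>R a)"
    using eventually_happens'[OF trivial_limit_at_right_real] by blast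
  moreover have "a \<bullet> (s *\<^sub>R a) = s * norm a ^ 2"
    by (simp add: dot_square_norm)
  moreover have "norm a / 2 * norm (s *\<^sub>R a) = s * norm a ^ 2 / 2"
    using \<open>s > 0\<close> by (simp add: power2_eq_square)
  moreover have "s * norm a ^ 2 > 0"
    using \<open>s > 0\<close> a by simp
  ultimately show False by linarith
qed

lemma reg_normal_pullback:
  assumes T: "(T has_derivative T') (at z)"
    and "z \<in> S" and maps: "\<And>s. s \<in> S \<Longrightarrow> T s \<in> C"
    and w: "w \<in> reg_normal C (T z)"
    and v: "\<And>h. v \<bullet> h = w \<bullet> T' h"
  shows "v \<in> reg_normal S z"
  unfolding reg_normal_iff_eventually
proof (intro conjI allI impI)
  fix e :: real assume "e > 0"
  interpret T': bounded_linear T'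
    using T by (rule has_derivative_bounded_linear)
  obtain K where "K > 0" and lip: "\<forall>\<^sub>F z' in nhds z. norm (T z' - T z) \<le> K * norm (z' - z)"
    using has_derivative_eventually_norm_diff_le[OF T] by blast
  define e' where "e' = e / (2 * (norm w + 1))"
  have "norm w + 1 > 0"
    by (simp add: add_nonneg_pos)
  with \<open>e > 0\<close> have "e' > 0" and we': "norm w * e' \<le> e / 2"
    by (simp_all add: e'_def field_simps)
  have "\<forall>\<^sub>F c in nhds (T z). c \<in> C \<longrightarrow> w \<bullet> (c - T z) \<le> e / (2 * K) * norm (c - T z)"
    using \<open>K > 0\<close> \<open>e > 0\<close> by (intro reg_normal_eventually_le[OF w]) simp
  moreover have "filterlim T (nhds (T z)) (nhds z)"
    using has_derivative_continuous[OF T] by (simp add: isCont_def tendsto_at_iff_tendsto_nhds)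
  ultimately have "\<forall>\<^sub>F z' in nhds z. T z' \<in> C \<longrightarrow> w \<bullet> (T z' - T z) \<le> e / (2 * K) * norm (T z' - T z)"
    by (rule eventually_compose_filterlim)
  with lip has_derivative_eventually_remainder_le[OF T \<open>e' > 0\<close>]
  show "\<forall>\<^sub>F z' in nhds z. z' \<in> S \<longrightarrow> v \<bullet> (z' - z) \<le> e * norm (z' - z)"
  proof eventually_elim
    case (elim z')
    let ?h = "z' - z" and ?r = "T z' - T z - T' (z' - z)"
    show ?case
    proof
      assume "z' \<in> S"
      have "w \<bullet> (T z' - T z) \<le> e / (2 * K) * norm (T z' - T z)"
        using elim(3) maps[OF \<open>z' \<in> S\<close>] by blast
      also have "\<dots> \<le> e / (2 * K) * (K * norm ?h)"
        using elim(1) \<open>K > 0\<close> \<open>e > 0\<close> by (intro mult_left_mono) auto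
      also have "\<dots> = e / 2 * norm ?h"
        using \<open>K > 0\<close> by simp
      finally have "w \<bullet> (T z' - T z) \<le> e / 2 * norm ?h" .
      moreover have "- (w \<bullet> ?r) \<le> norm w * e' * norm ?h"
        using Cauchy_Schwarz_ineq2[of w ?r] mult_left_mono[OF elim(2) norm_ge_zero[of w]]
        by (simp add: mult.assoc)
      moreover have "norm w * e' * norm ?h \<le> e / 2 * norm ?h"
        using mult_right_mono[OF we' norm_ge_zero] by simp
      moreover have "v \<bullet> ?h = w \<bullet> (T z' - T z) - w \<bullet> ?r"
        by (simp add: v inner_diff_right T'.diff)
      ultimately show "v \<bullet> ?h \<le> e * norm ?h"
        by linarith
    qed
  qed
qed (fact \<open>z \<in> S\<close>)

lemma reg_normal_UNIV_TimesD:
  assumes ab: "(a, b) \<in> reg_normal (UNIV \<times> D) (x, d)"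
  shows "a = 0" and "b \<in> reg_normal D d"
proof -
  have "d \<in> D"
    using reg_normal_imp_mem[OF ab] by simp
  have ev: "\<forall>\<^sub>F p in nhds (x, d). p \<in> UNIV \<times> D \<longrightarrow> (a, b) \<bullet> (p - (x, d)) \<le> e * norm (p - (x, d))"
    if "e > 0" for e
    using reg_normal_eventually_le[OF ab that] .
  show "a = 0"
  proof (rule inner_eq_0_if_eventually_le)
    fix e :: real assume "e > 0"
    have "((\<lambda>x'. (x', d)) \<longlongrightarrow> (x, d)) (nhds x)"
      by (auto intro!: tendsto_eq_intros filterlim_ident)
    with ev[OF \<open>e > 0\<close>] show "\<forall>\<^sub>F x' in nhds x. a \<bullet> (x' - x) \<le> e * norm (x' - x)"
      using \<open>d \<in> D\<close> by (auto simp: filterlim_iff norm_Pair)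
  qed
  show "b \<in> reg_normal D d"
    unfolding reg_normal_iff_eventually
  proof (intro conjI allI impI)
    fix e :: real assume "e > 0"
    have "((\<lambda>d'. (x, d')) \<longlongrightarrow> (x, d)) (nhds d)"
      by (auto intro!: tendsto_eq_intros filterlim_ident)
    with ev[OF \<open>e > 0\<close>] show "\<forall>\<^sub>F d' in nhds d. d' \<in> D \<longrightarrow> b \<bullet> (d' - d) \<le> e * norm (d' - d)"
      by (auto simp: filterlim_iff norm_Pair)
  qed (fact \<open>d \<in> D\<close>)
qed

lemma reg_normal_scaleR:
  assumes \<eta>: "\<eta> \<in> reg_normal C z" and "c \<ge> 0"
  shows "c *\<^sub>R \<eta> \<in> reg_normal C z"
  unfolding reg_normal_iff_eventually
proof (intro conjI allI impI)
  fix e :: real assume "e > 0"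
  then have "\<forall>\<^sub>F z' in nhds z. z' \<in> C \<longrightarrow> \<eta> \<bullet> (z' - z) \<le> e / (c + 1) * norm (z' - z)"
    using \<open>c \<ge> 0\<close> by (intro reg_normal_eventually_le[OF \<eta>]) simp
  then show "\<forall>\<^sub>F z' in nhds z. z' \<in> C \<longrightarrow> c *\<^sub>R \<eta> \<bullet> (z' - z) \<le> e * norm (z' - z)"
  proof eventually_elim
    case (elim z')
    show ?case
    proof
      assume "z' \<in> C"
      then have "c * (\<eta> \<bullet> (z' - z)) \<le> c * (e / (c + 1) * norm (z' - z))"
        using elim \<open>c \<ge> 0\<close> by (intro mult_left_mono) auto
      also have "\<dots> \<le> e * norm (z' - z)"
        using \<open>c \<ge> 0\<close> \<open>e > 0\<close> by (simp add: field_simps mult_right_mono)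
      finally show "c *\<^sub>R \<eta> \<bullet> (z' - z) \<le> e * norm (z' - z)" by simp
    qed
  qed
qed (use \<eta> in \<open>rule reg_normal_imp_mem\<close>)

lemma reg_normal_imp_lim_normal: "\<eta> \<in> reg_normal C z \<Longrightarrow> \<eta> \<in> lim_normal C z"
  unfolding lim_normal_def by (blast intro: reg_normal_imp_mem)

lemma lim_normal_scaleR: "\<eta> \<in> lim_normal C z \<Longrightarrow> c \<ge> 0 \<Longrightarrow> c *\<^sub>R \<eta> \<in> lim_normal C z"
  unfolding lim_normal_def by (blast intro: tendsto_scaleR tendsto_const reg_normal_scaleR)

lemma dir_normal_scaleR: "\<eta> \<in> dir_normal C z w \<Longrightarrow> c \<ge> 0 \<Longrightarrow> c *\<^sub>R \<eta> \<in> dir_normal C z w"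
  unfolding dir_normal_def by (blast intro: tendsto_scaleR tendsto_const reg_normal_scaleR)

section \<open>The graphical derivative of the normal cone mapping\<close>

lemma graph_deriv_normal_scaleR:
  assumes "q \<in> graph_deriv_normal D y \<eta> w" and "c \<ge> 0"
  shows "c *\<^sub>R q \<in> graph_deriv_normal D y (c *\<^sub>R \<eta>) w"
proof -
  obtain t p where "\<forall>k. t k > 0" "t \<longlonglongrightarrow> 0" and p: "p \<longlonglongrightarrow> (w, q)"
    and mem: "\<And>k. \<eta> + t k *\<^sub>R snd (p k) \<in> lim_normal D (y + t k *\<^sub>R fst (p k))"
    using assms(1) unfolding graph_deriv_normal_def tangent_cone_def gph_normal_def
    by (fastforce simp: case_prod_unfold)
  have "c *\<^sub>R \<eta> + t k *\<^sub>R (c *\<^sub>R snd (p k)) \<in> lim_normal D (y + t k *\<^sub>R fst (p k))" for k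
    using lim_normal_scaleR[OF mem \<open>c \<ge> 0\<close>] by (simp add: algebra_simps)
  moreover have "(\<lambda>k. (fst (p k), c *\<^sub>R snd (p k))) \<longlonglongrightarrow> (w, c *\<^sub>R q)"
    using tendsto_fst[OF p] tendsto_snd[OF p] by (auto intro!: tendsto_intros)
  ultimately show ?thesis
    unfolding graph_deriv_normal_def tangent_cone_def gph_normal_def
    using \<open>\<forall>k. t k > 0\<close> \<open>t \<longlonglongrightarrow> 0\<close>
    by (intro CollectI exI[of _ t] exI[of _ "\<lambda>k. (fst (p k), c *\<^sub>R snd (p k))"]) auto
qed

lemma graph_deriv_normal_eventuallyI:
  assumes "t \<longlonglongrightarrow> 0" "w \<longlonglongrightarrow> w0" "q \<longlonglongrightarrow> q0"
    and "\<forall>\<^sub>F k in sequentially. t k > 0 \<and> \<eta> + t k *\<^sub>R q k \<in> lim_normal D (y + t k *\<^sub>R w k)"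
  shows "q0 \<in> graph_deriv_normal D y \<eta> w0"
proof -
  obtain N where N: "\<And>k. t (k + N) > 0 \<and>
      \<eta> + t (k + N) *\<^sub>R q (k + N) \<in> lim_normal D (y + t (k + N) *\<^sub>R w (k + N))"
    using assms(4) unfolding eventually_sequentially by (metis le_add2)
  have "(\<lambda>k. (w (k + N), q (k + N))) \<longlonglongrightarrow> (w0, q0)"
    using assms(2,3) by (intro tendsto_Pair LIMSEQ_ignore_initial_segment)
  with N LIMSEQ_ignore_initial_segment[OF assms(1)] show ?thesis
    unfolding graph_deriv_normal_def tangent_cone_def gph_normal_def
    by (intro CollectI exI[of _ "\<lambda>k. t (k + N)"] exI[of _ "\<lambda>k. (w (k + N), q (k + N))"]) auto
qed

lemma Dsub_normal_eventuallyI: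
  assumes "norm q0 = 1" "w \<longlonglongrightarrow> w0" "q \<longlonglongrightarrow> q0" "t \<longlonglongrightarrow> 0" "\<tau> \<longlonglongrightarrow> 0"
    and "filterlim (\<lambda>k. \<tau> k / t k) at_top sequentially"
    and "\<forall>\<^sub>F k in sequentially. t k > 0 \<and> \<tau> k > 0 \<and> \<eta> + \<tau> k *\<^sub>R q k \<in> lim_normal D (y + t k *\<^sub>R w k)"
  shows "q0 \<in> Dsub_normal D y \<eta> w0"
proof -
  obtain N where N: "\<And>k. t (k + N) > 0 \<and> \<tau> (k + N) > 0 \<and>
      \<eta> + \<tau> (k + N) *\<^sub>R q (k + N) \<in> lim_normal D (y + t (k + N) *\<^sub>R w (k + N))"
    using assms(7) unfolding eventually_sequentially by (metis le_add2)
  have "filterlim (\<lambda>k. \<tau> (k + N) / t (k + N)) at_top sequentially"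
    using filterlim_compose[OF assms(6) filterlim_add_const_nat_at_top] by simp
  with N assms(1-5) show ?thesis
    unfolding Dsub_normal_def
    by (intro CollectI conjI exI[of _ "\<lambda>k. w (k + N)"] exI[of _ "\<lambda>k. q (k + N)"]
        exI[of _ "\<lambda>k. t (k + N)"] exI[of _ "\<lambda>k. \<tau> (k + N)"])
      (auto intro: LIMSEQ_ignore_initial_segment)
qed

lemma graph_deriv_normal_blowup:
  assumes t: "\<And>k. t k > 0" "t \<longlonglongrightarrow> 0" and w: "w \<longlonglongrightarrow> w0"
    and big: "filterlim (\<lambda>k. norm (q k)) at_top sequentially"
    and tq: "(\<lambda>k. t k *\<^sub>R q k) \<longlonglongrightarrow> 0" and \<zeta>: "(\<lambda>k. sgn (q k)) \<longlonglongrightarrow> \<zeta>"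
    and mem: "\<And>k. \<eta> + t k *\<^sub>R q k \<in> lim_normal D (y + t k *\<^sub>R w k)"
  shows "\<zeta> \<in> graph_deriv_normal D y \<eta> 0"
proof (rule graph_deriv_normal_eventuallyI[OF _ _ \<zeta>])
  show "(\<lambda>k. t k * norm (q k)) \<longlonglongrightarrow> 0"
    using tendsto_norm[OF tq] by (simp add: abs_of_pos t(1))
  show "(\<lambda>k. (1 / norm (q k)) *\<^sub>R w k) \<longlonglongrightarrow> 0"
    using tendsto_scaleR[OF tendsto_inverse_0_at_top[OF big] w] by (simp add: divide_inverse)
  have "\<forall>\<^sub>F k in sequentially. norm (q k) > 0"
    using big unfolding filterlim_at_top_dense by blast
  then show "\<forall>\<^sub>F k in sequentially. t k * norm (q k) > 0 \<and> \<eta> + (t k * norm (q k)) *\<^sub>R sgn (q k)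
      \<in> lim_normal D (y + (t k * norm (q k)) *\<^sub>R ((1 / norm (q k)) *\<^sub>R w k))"
  proof eventually_elim
    case (elim k)
    then have "(t k * norm (q k)) *\<^sub>R sgn (q k) = t k *\<^sub>R q k"
      and "(t k * norm (q k)) *\<^sub>R ((1 / norm (q k)) *\<^sub>R w k) = t k *\<^sub>R w k"
      by (simp_all add: sgn_div_norm)
    with elim t(1)[of k] mem[of k] show ?case
      by simp
  qed
qed

lemma Dsub_normal_blowup:
  assumes t: "\<And>k. t k > 0" "t \<longlonglongrightarrow> 0" and w: "w \<longlonglongrightarrow> w0" "w0 \<noteq> 0"
    and big: "filterlim (\<lambda>k. norm (q k)) at_top sequentially"
    and tq: "(\<lambda>k. t k *\<^sub>R q k) \<longlonglongrightarrow> 0" and \<zeta>: "(\<lambda>k. sgn (q k)) \<longlonglongrightarrow> \<zeta>" "norm \<zeta> = 1"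
    and mem: "\<And>k. \<eta> + t k *\<^sub>R q k \<in> lim_normal D (y + t k *\<^sub>R w k)"
  shows "\<zeta> \<in> Dsub_normal D y \<eta> ((1 / norm w0) *\<^sub>R w0)"
proof (rule Dsub_normal_eventuallyI[OF \<zeta>(2) _ \<zeta>(1)])
  show "(\<lambda>k. (1 / norm w0) *\<^sub>R w k) \<longlonglongrightarrow> (1 / norm w0) *\<^sub>R w0"
    using w by (intro tendsto_intros)
  show "(\<lambda>k. t k * norm w0) \<longlonglongrightarrow> 0"
    using tendsto_mult[OF t(2) tendsto_const[of "norm w0"]] by simp
  show "(\<lambda>k. t k * norm (q k)) \<longlonglongrightarrow> 0"
    using tendsto_norm[OF tq] by (simp add: abs_of_pos t(1))
  have "filterlim (\<lambda>k. (1 / norm w0) * norm (q k)) at_top sequentially"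
    using w(2) by (intro filterlim_tendsto_pos_mult_at_top[OF tendsto_const _ big]) simp
  moreover have "(1 / norm w0) * norm (q k) = t k * norm (q k) / (t k * norm w0)" for k
    using t(1)[of k] by simp
  ultimately show "filterlim (\<lambda>k. t k * norm (q k) / (t k * norm w0)) at_top sequentially"
    by simp
  have "\<forall>\<^sub>F k in sequentially. norm (q k) > 0"
    using big unfolding filterlim_at_top_dense by blast
  then show "\<forall>\<^sub>F k in sequentially. t k * norm w0 > 0 \<and> t k * norm (q k) > 0 \<and>
      \<eta> + (t k * norm (q k)) *\<^sub>R sgn (q k) \<in> lim_normal D (y + (t k * norm w0) *\<^sub>R ((1 / norm w0) *\<^sub>R w k))"
  proof eventually_elim
    case (elim k)
    then have "(t k * norm (q k)) *\<^sub>R sgn (q k) = t k *\<^sub>R q k"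
      by (simp add: sgn_div_norm)
    with elim t(1)[of k] w(2) mem[of k] show ?case
      by simp
  qed
qed

lemma graph_deriv_normal_attains_limit:
  fixes L :: "'b::euclidean_space \<Rightarrow> 'c::real_normed_vector"
  assumes L: "bounded_linear L"
    and t: "\<And>k. t k > 0" "t \<longlonglongrightarrow> 0" and w: "w \<longlonglongrightarrow> w0" and \<mu>: "\<mu> \<longlonglongrightarrow> \<eta>"
    and mem: "\<And>k. \<mu> k \<in> lim_normal D (y + t k *\<^sub>R w k)"
    and Lq: "(\<lambda>k. L ((1 / t k) *\<^sub>R (\<mu> k - \<eta>))) \<longlonglongrightarrow> v"
    and Q: "(\<forall>\<zeta>. L \<zeta> = 0 \<longrightarrow> \<zeta> \<in> graph_deriv_normal D y \<eta> 0 \<longrightarrow> \<zeta> = 0) \<or>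
            (w0 \<noteq> 0 \<and> (\<forall>\<zeta>. L \<zeta> = 0 \<longrightarrow> \<zeta> \<notin> Dsub_normal D y \<eta> ((1 / norm w0) *\<^sub>R w0)))"
  shows "\<exists>z \<in> graph_deriv_normal D y \<eta> w0. L z = v"
proof -
  interpret L: bounded_linear L by (fact L)
  define q where "q k = (1 / t k) *\<^sub>R (\<mu> k - \<eta>)" for k
  have \<mu>_q: "\<mu> k = \<eta> + t k *\<^sub>R q k" for k
    using t(1)[of k] by (simp add: q_def)
  obtain r where r: "strict_mono r"
    and cases: "(\<exists>Z. (\<lambda>k. q (r k)) \<longlonglongrightarrow> Z) \<or>
      (\<exists>\<zeta>. filterlim (\<lambda>k. norm (q (r k))) at_top sequentially \<and>
           (\<lambda>k. sgn (q (r k))) \<longlonglongrightarrow> \<zeta> \<and> norm \<zeta> = 1)"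
    by (rule convergent_or_unbounded_subseq[of q]) blast+
  have sub: "(\<lambda>k. f (r k)) \<longlonglongrightarrow> l" if "f \<longlonglongrightarrow> l" for f :: "nat \<Rightarrow> 'z::topological_space" and l
    using LIMSEQ_subseq_LIMSEQ[OF that r] by (simp add: o_def)
  from cases show ?thesis
  proof (elim disjE exE conjE)
    fix Z assume Z: "(\<lambda>k. q (r k)) \<longlonglongrightarrow> Z"
    have "Z \<in> graph_deriv_normal D y \<eta> w0"
      using sub[OF t(2)] sub[OF w] Z t(1) mem
      by (intro graph_deriv_normal_eventuallyI) (auto simp: \<mu>_q)
    moreover have "L Z = v"
      using LIMSEQ_unique[OF L.tendsto[OF Z] sub[OF Lq[folded q_def]]] .
    ultimately show ?thesis ..
  next
    fix \<zeta> assume big: "filterlim (\<lambda>k. norm (q (r k))) at_top sequentially"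
      and \<zeta>: "(\<lambda>k. sgn (q (r k))) \<longlonglongrightarrow> \<zeta>" and "norm \<zeta> = 1"
    have "L \<zeta> = 0"
      using bounded_linear_sgn_limit_eq_0[OF L sub[OF Lq[folded q_def]] big \<zeta>] .
    have tq: "(\<lambda>k. t (r k) *\<^sub>R q (r k)) \<longlonglongrightarrow> 0"
      using LIM_zero[OF sub[OF \<mu>]] by (simp add: \<mu>_q)
    have mem_q: "\<eta> + t k *\<^sub>R q k \<in> lim_normal D (y + t k *\<^sub>R w k)" for k
      using mem[of k] by (simp add: \<mu>_q)
    from Q have False
    proof
      assume "\<forall>\<zeta>. L \<zeta> = 0 \<longrightarrow> \<zeta> \<in> graph_deriv_normal D y \<eta> 0 \<longrightarrow> \<zeta> = 0"
      moreover have "\<zeta> \<in> graph_deriv_normal D y \<eta> 0"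
        using t(1) sub[OF t(2)] sub[OF w] big tq \<zeta> mem_q by (rule graph_deriv_normal_blowup)
      ultimately show False
        using \<open>L \<zeta> = 0\<close> \<open>norm \<zeta> = 1\<close> by auto
    next
      assume Q3: "w0 \<noteq> 0 \<and> (\<forall>\<zeta>. L \<zeta> = 0 \<longrightarrow> \<zeta> \<notin> Dsub_normal D y \<eta> ((1 / norm w0) *\<^sub>R w0))"
      have "\<zeta> \<in> Dsub_normal D y \<eta> ((1 / norm w0) *\<^sub>R w0)"
        using t(1) sub[OF t(2)] sub[OF w] conjunct1[OF Q3] big tq \<zeta> \<open>norm \<zeta> = 1\<close> mem_q
        by (rule Dsub_normal_blowup)
      with Q3 \<open>L \<zeta> = 0\<close> show False
        by blast
    qed
    then show ?thesis ..
  qed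
qed

section \<open>Normals to the graph of the constraint mapping\<close>

lemma reg_normal_gph_Phi_iff:
  fixes g :: "'a::euclidean_space \<Rightarrow> 'b::euclidean_space"
  assumes g: "(g has_derivative blinfun_apply A) (at x)"
  shows "(xs, - l) \<in> reg_normal (gph_Phi g D) (x, y) \<longleftrightarrow>
    l \<in> reg_normal D (g x - y) \<and> xs = blinfun_adjoint A l"
proof
  assume xl: "(xs, - l) \<in> reg_normal (gph_Phi g D) (x, y)"
  have "((\<lambda>p. (fst p, g (fst p) - snd p)) has_derivative (\<lambda>h. (fst h, A (fst h) - snd h)))
      (at (x, g x - y))"
    using g by (auto intro!: derivative_eq_intros has_derivative_compose[of fst fst _ _ g])
  then have "(xs - blinfun_adjoint A l, l) \<in> reg_normal (UNIV \<times> D) (x, g x - y)"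
  proof (rule reg_normal_pullback)
    show "(x, g x - y) \<in> UNIV \<times> D"
      using reg_normal_imp_mem[OF xl] by (simp add: gph_Phi_def)
    show "(xs, - l) \<in>
        reg_normal (gph_Phi g D) (fst (x, g x - y), g (fst (x, g x - y)) - snd (x, g x - y))"
      using xl by simp
    show "(xs - blinfun_adjoint A l, l) \<bullet> h = (xs, - l) \<bullet> (fst h, A (fst h) - snd h)" for h
      by (cases h) (simp add: inner_diff_left inner_diff_right inner_blinfun_adjoint inner_commute)
  qed (auto simp: gph_Phi_def)
  then have "xs - blinfun_adjoint A l = 0" and "l \<in> reg_normal D (g x - y)"
    by (rule reg_normal_UNIV_TimesD)+
  then show "l \<in> reg_normal D (g x - y) \<and> xs = blinfun_adjoint A l"
    by simp
next
  assume l: "l \<in> reg_normal D (g x - y) \<and> xs = blinfun_adjoint A l"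
  have "((\<lambda>p. g (fst p) - snd p) has_derivative (\<lambda>h. A (fst h) - snd h)) (at (x, y))"
    using g by (auto intro!: derivative_eq_intros has_derivative_compose[of fst fst _ _ g])
  then show "(xs, - l) \<in> reg_normal (gph_Phi g D) (x, y)"
  proof (rule reg_normal_pullback)
    show "(x, y) \<in> gph_Phi g D"
      using reg_normal_imp_mem[OF conjunct1[OF l]] by (simp add: gph_Phi_def)
    show "l \<in> reg_normal D (g (fst (x, y)) - snd (x, y))"
      using l by simp
    show "(xs, - l) \<bullet> h = l \<bullet> (A (fst h) - snd h)" for h
      using l by (cases h) (simp add: inner_diff_right inner_blinfun_adjoint inner_commute)
  qed (auto simp: gph_Phi_def)
qed

lemma lim_normal_gph_Phi:
  fixes g :: "'a::euclidean_space \<Rightarrow> 'b::euclidean_space"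
  assumes g: "(g has_derivative blinfun_apply A) (at x)" and l: "l \<in> lim_normal D (g x)"
  shows "(blinfun_adjoint A l, - l) \<in> lim_normal (gph_Phi g D) (x, 0)"
proof -
  obtain d \<eta> where d: "d \<longlonglongrightarrow> g x" and \<eta>: "\<eta> \<longlonglongrightarrow> l" and reg: "\<And>k. \<eta> k \<in> reg_normal D (d k)"
    using l unfolding lim_normal_def by blast
  have "(blinfun_adjoint A (\<eta> k), - \<eta> k) \<in> reg_normal (gph_Phi g D) (x, g x - d k)" for k
    using reg_normal_gph_Phi_iff[OF g] reg by simp
  moreover have "(\<lambda>k. (x, g x - d k)) \<longlonglongrightarrow> (x, 0)"
    using d by (auto intro!: tendsto_eq_intros)
  moreover have "(\<lambda>k. (blinfun_adjoint A (\<eta> k), - \<eta> k)) \<longlonglongrightarrow> (blinfun_adjoint A l, - l)"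
    using \<eta> by (intro tendsto_intros blinfun_adjoint.tendsto)
  ultimately show ?thesis
    unfolding lim_normal_def by (blast dest: reg_normal_imp_mem)
qed

lemma dir_normal_gph_Phi:
  fixes g :: "'a::euclidean_space \<Rightarrow> 'b::euclidean_space"
  assumes g: "\<And>x. (g has_derivative blinfun_apply (gd x)) (at x)" and gd: "isCont gd x"
    and l: "l \<in> dir_normal D (g x) (gd x u)"
  shows "(blinfun_adjoint (gd x) l, - l) \<in> dir_normal (gph_Phi g D) (x, 0) (u, 0)"
proof -
  obtain t w \<eta> where t: "\<And>k. t k > 0" "t \<longlonglongrightarrow> 0" and w: "w \<longlonglongrightarrow> gd x u"
    and \<eta>: "\<eta> \<longlonglongrightarrow> l" and reg: "\<And>k. \<eta> k \<in> reg_normal D (g x + t k *\<^sub>R w k)"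
    using l unfolding dir_normal_def by blast
  define v where "v k = (1 / t k) *\<^sub>R (g (x + t k *\<^sub>R u) - g x) - w k" for k
  have "(\<lambda>k. (1 / t k) *\<^sub>R (g (x + t k *\<^sub>R u) - g x)) \<longlonglongrightarrow> gd x u"
    using t by (intro tendsto_difference_quotient[OF g]) (auto simp: less_imp_neq[symmetric])
  then have "v \<longlonglongrightarrow> 0"
    unfolding v_def using tendsto_diff[OF _ w] by fastforce
  have "g (x + t k *\<^sub>R u) - t k *\<^sub>R v k = g x + t k *\<^sub>R w k" for k
    using t(1)[of k] by (simp add: v_def algebra_simps)
  then have "(blinfun_adjoint (gd (x + t k *\<^sub>R u)) (\<eta> k), - \<eta> k)
      \<in> reg_normal (gph_Phi g D) ((x, 0) + t k *\<^sub>R (u, v k))" for k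
    using reg_normal_gph_Phi_iff[OF g] reg by simp
  moreover have "(\<lambda>k. x + t k *\<^sub>R u) \<longlonglongrightarrow> x"
    using tendsto_add[OF tendsto_const tendsto_scaleR[OF t(2) tendsto_const]] by simp
  then have "(\<lambda>k. gd (x + t k *\<^sub>R u)) \<longlonglongrightarrow> gd x"
    by (rule isCont_tendsto_compose[OF gd])
  then have "(\<lambda>k. (blinfun_adjoint (gd (x + t k *\<^sub>R u)) (\<eta> k), - \<eta> k))
      \<longlonglongrightarrow> (blinfun_adjoint (gd x) l, - l)"
    using \<eta> by (intro tendsto_intros blinfun_adjoint.tendsto)
  moreover have "(\<lambda>k. (u, v k)) \<longlonglongrightarrow> (u, 0)"
    using \<open>v \<longlonglongrightarrow> 0\<close> by (intro tendsto_intros)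
  ultimately show ?thesis
    unfolding dir_normal_def using t by blast
qed

section \<open>Asymptotic regularity\<close>

lemma representation_of_scaled:
  assumes "c > 0" and "\<eta> \<in> dir_normal D y w" and "blinfun_adjoint A \<eta> = 0"
    and "z \<in> graph_deriv_normal D y \<eta> w"
    and xs: "c *\<^sub>R xs = blinfun_adjoint B \<eta> + blinfun_adjoint A z"
  shows "\<exists>ys zs. xs = blinfun_adjoint B ys + blinfun_adjoint A zs
    \<and> ys \<in> dir_normal D y w \<and> blinfun_adjoint A ys = 0 \<and> zs \<in> graph_deriv_normal D y ys w"
proof (intro exI conjI)
  show "xs = blinfun_adjoint B ((1 / c) *\<^sub>R \<eta>) + blinfun_adjoint A ((1 / c) *\<^sub>R z)"
    using arg_cong[OF xs, of "scaleR (1 / c)"] \<open>c > 0\<close>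
    by (simp add: blinfun_adjoint.scaleR_right scaleR_add_right)
  show "(1 / c) *\<^sub>R \<eta> \<in> dir_normal D y w"
    using assms(1,2) by (intro dir_normal_scaleR) simp_all
  show "blinfun_adjoint A ((1 / c) *\<^sub>R \<eta>) = 0"
    using assms(3) by (simp add: blinfun_adjoint.scaleR_right)
  show "(1 / c) *\<^sub>R z \<in> graph_deriv_normal D y ((1 / c) *\<^sub>R \<eta>) w"
    using assms(1,4) by (intro graph_deriv_normal_scaleR) simp_all
qed

lemma asym_seq_rescaled:
  fixes g :: "'a::euclidean_space \<Rightarrow> 'b::euclidean_space"
    and gd :: "'a \<Rightarrow> ('a \<Rightarrow>\<^sub>L 'b)"
  assumes g: "\<And>x. (g has_derivative blinfun_apply (gd x)) (at x)"
    and "(xb, 0) \<in> gph_Phi g D"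
    and asym: "asym_seq (gph_Phi g D) xb u xk yk xsk lk xs ys"
  obtains t U W \<mu> \<theta> where "\<And>k. t k > 0" "t \<longlonglongrightarrow> 0" "U \<longlonglongrightarrow> u" "W \<longlonglongrightarrow> gd xb u"
    "\<And>k. \<mu> k \<in> reg_normal D (g xb + t k *\<^sub>R W k)" "\<And>k. norm (\<mu> k) \<le> 1"
    "\<And>k. 0 \<le> \<theta> k \<and> \<theta> k \<le> 1" "\<forall>\<^sub>F k in sequentially. \<theta> k < 1 \<longrightarrow> norm (\<mu> k) = 1"
    "\<And>k. \<theta> k *\<^sub>R xsk k = (1 / t k) *\<^sub>R blinfun_adjoint (gd (xb + t k *\<^sub>R U k)) (\<mu> k)"
proof -
  let ?G = "gph_Phi g D"
  have seq: "\<And>k. (xk k, 0) \<notin> ?G \<and> xsk k \<in> reg_coderiv ?G (xk k) (yk k) (lk k)"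
    and "xk \<longlonglongrightarrow> xb" and U: "(\<lambda>k. (1 / norm (xk k - xb)) *\<^sub>R (xk k - xb)) \<longlonglongrightarrow> u"
    and y: "(\<lambda>k. (1 / norm (xk k - xb)) *\<^sub>R yk k) \<longlonglongrightarrow> 0"
    and lk_big: "filterlim (\<lambda>k. norm (lk k)) at_top sequentially"
    using asym unfolding asym_seq_def by blast+
  define t where "t k = norm (xk k - xb)" for k
  define U where "U k = (1 / t k) *\<^sub>R (xk k - xb)" for k
  define W where "W k = (1 / t k) *\<^sub>R (g (xk k) - yk k - g xb)" for k
  define c where "c k = min (t k) (1 / norm (lk k))" for k
  have t: "t k > 0" for k
    using seq[of k] \<open>(xb, 0) \<in> ?G\<close> by (auto simp: t_def)
  have xk: "xk k = xb + t k *\<^sub>R U k" and gW: "g (xk k) - yk k = g xb + t k *\<^sub>R W k" for k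
    using t[of k] by (simp_all add: U_def W_def)
  have "t \<longlonglongrightarrow> 0"
    using \<open>xk \<longlonglongrightarrow> xb\<close> unfolding t_def by (simp add: LIM_zero tendsto_norm_zero)
  have "U \<longlonglongrightarrow> u"
    using U by (simp add: U_def[abs_def] t_def[abs_def])
  have "(\<lambda>k. (1 / t k) *\<^sub>R (g (xb + t k *\<^sub>R U k) - g xb) - (1 / t k) *\<^sub>R yk k) \<longlonglongrightarrow> gd xb u - 0"
    using t \<open>t \<longlonglongrightarrow> 0\<close> \<open>U \<longlonglongrightarrow> u\<close> y[folded t_def]
    by (intro tendsto_diff tendsto_difference_quotient[OF g]) (auto simp: less_imp_neq[symmetric])
  moreover have "(1 / t k) *\<^sub>R (g (xb + t k *\<^sub>R U k) - g xb) - (1 / t k) *\<^sub>R yk k = W k" for k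
    by (simp add: W_def xk[symmetric] algebra_simps)
  ultimately have "W \<longlonglongrightarrow> gd xb u"
    by simp
  have "lk k \<in> reg_normal D (g (xk k) - yk k) \<and> xsk k = blinfun_adjoint (gd (xk k)) (lk k)" for k
    using seq[of k] reg_normal_gph_Phi_iff[OF g] by (simp add: reg_coderiv_def)
  then have lk_reg: "lk k \<in> reg_normal D (g xb + t k *\<^sub>R W k)"
    and xsk: "xsk k = blinfun_adjoint (gd (xb + t k *\<^sub>R U k)) (lk k)" for k
    by (simp_all add: gW flip: xk)
  show thesis
  proof
    show "c k *\<^sub>R lk k \<in> reg_normal D (g xb + t k *\<^sub>R W k)" for k
      using t[of k] by (intro reg_normal_scaleR lk_reg) (simp add: c_def)
    show "norm (c k *\<^sub>R lk k) \<le> 1" for k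
      using t[of k] by (cases "lk k = 0") (auto simp: c_def min_def field_simps)
    show "0 \<le> c k / t k \<and> c k / t k \<le> 1" for k
      using t[of k] by (auto simp: c_def min_def field_simps)
    show "(c k / t k) *\<^sub>R xsk k =
        (1 / t k) *\<^sub>R blinfun_adjoint (gd (xb + t k *\<^sub>R U k)) (c k *\<^sub>R lk k)" for k
      by (simp add: xsk blinfun_adjoint.scaleR_right)
    have "\<forall>\<^sub>F k in sequentially. norm (lk k) > 0"
      using lk_big unfolding filterlim_at_top_dense by blast
    then show "\<forall>\<^sub>F k in sequentially. c k / t k < 1 \<longrightarrow> norm (c k *\<^sub>R lk k) = 1"
      by eventually_elim (use t in \<open>auto simp: c_def min_def split: if_splits\<close>)
  qed fact+
qed

lemma rescaled_multiplier_limit: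
  fixes g :: "'a::euclidean_space \<Rightarrow> 'b::euclidean_space"
    and gd :: "'a \<Rightarrow> ('a \<Rightarrow>\<^sub>L 'b)" and gdd :: "'a \<Rightarrow> ('a \<Rightarrow>\<^sub>L ('a \<Rightarrow>\<^sub>L 'b))"
  assumes gd: "(gd has_derivative blinfun_apply (gdd xb)) (at xb)"
    and t: "\<And>k. t k > 0" "t \<longlonglongrightarrow> 0" and U: "U \<longlonglongrightarrow> u" and W: "W \<longlonglongrightarrow> gd xb u"
    and \<mu>: "\<mu> \<longlonglongrightarrow> \<eta>" and reg: "\<And>k. \<mu> k \<in> reg_normal D (g xb + t k *\<^sub>R W k)"
    and \<theta>: "\<theta> \<longlonglongrightarrow> \<theta>0" and xs: "xsk \<longlonglongrightarrow> xs"
    and xsk: "\<And>k. \<theta> k *\<^sub>R xsk k = (1 / t k) *\<^sub>R blinfun_adjoint (gd (xb + t k *\<^sub>R U k)) (\<mu> k)"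
    and Q23: "(\<forall>ys zh. blinfun_adjoint (gd xb) ys = 0 \<longrightarrow> blinfun_adjoint (gd xb) zh = 0 \<longrightarrow>
                 ys \<in> dir_normal D (g xb) (gd xb u) \<longrightarrow>
                 zh \<in> graph_deriv_normal D (g xb) ys 0 \<longrightarrow> zh = 0)
           \<or> (gd xb u \<noteq> 0 \<and>
              (\<forall>ys zh. blinfun_adjoint (gd xb) ys = 0 \<longrightarrow> blinfun_adjoint (gd xb) zh = 0 \<longrightarrow>
                 ys \<in> dir_normal D (g xb) (gd xb u) \<longrightarrow>
                 zh \<notin> Dsub_normal D (g xb) ys ((1 / norm (gd xb u)) *\<^sub>R gd xb u)))"
  shows "\<eta> \<in> dir_normal D (g xb) (gd xb u)" and "blinfun_adjoint (gd xb) \<eta> = 0"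
    and "\<exists>z \<in> graph_deriv_normal D (g xb) \<eta> (gd xb u).
           \<theta>0 *\<^sub>R xs = blinfun_adjoint (gdd xb u) \<eta> + blinfun_adjoint (gd xb) z"
proof -
  let ?A = "blinfun_adjoint (gd xb)"
  define v where "v = \<theta>0 *\<^sub>R xs - blinfun_adjoint (gdd xb u) \<eta>"
  have "(\<lambda>k. (1 / t k) *\<^sub>R (gd (xb + t k *\<^sub>R U k) - gd xb)) \<longlonglongrightarrow> gdd xb u"
    using t by (intro tendsto_difference_quotient[OF gd _ _ U]) (auto simp: less_imp_neq[symmetric])
  from blinfun_adjoint.tendsto[OF this \<mu>]
  have "(\<lambda>k. \<theta> k *\<^sub>R xsk k -
      blinfun_adjoint ((1 / t k) *\<^sub>R (gd (xb + t k *\<^sub>R U k) - gd xb)) (\<mu> k)) \<longlonglongrightarrow> v"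
    unfolding v_def by (intro tendsto_diff tendsto_scaleR \<theta> xs)
  moreover have "\<theta> k *\<^sub>R xsk k - blinfun_adjoint ((1 / t k) *\<^sub>R (gd (xb + t k *\<^sub>R U k) - gd xb)) (\<mu> k)
      = (1 / t k) *\<^sub>R ?A (\<mu> k)" for k
    by (simp add: xsk blinfun_adjoint.scaleR_left blinfun_adjoint.diff_left algebra_simps)
  ultimately have quot: "(\<lambda>k. (1 / t k) *\<^sub>R ?A (\<mu> k)) \<longlonglongrightarrow> v"
    by simp
  have "(\<lambda>k. t k *\<^sub>R ((1 / t k) *\<^sub>R ?A (\<mu> k))) \<longlonglongrightarrow> 0 *\<^sub>R v"
    by (intro tendsto_scaleR t(2) quot)
  then have "(\<lambda>k. ?A (\<mu> k)) \<longlonglongrightarrow> 0"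
    using t(1) by (simp add: less_imp_neq[symmetric])
  then show A\<eta>: "?A \<eta> = 0"
    using LIMSEQ_unique[OF blinfun_adjoint.tendsto[OF tendsto_const \<mu>]] by blast
  show \<eta>: "\<eta> \<in> dir_normal D (g xb) (gd xb u)"
    unfolding dir_normal_def using t W \<mu> reg by blast
  have "(\<lambda>k. ?A ((1 / t k) *\<^sub>R (\<mu> k - \<eta>))) \<longlonglongrightarrow> v"
    using quot by (simp add: blinfun_adjoint.scaleR_right blinfun_adjoint.diff_right A\<eta>)
  then have "\<exists>z \<in> graph_deriv_normal D (g xb) \<eta> (gd xb u). ?A z = v"
    using Q23 A\<eta> \<eta>
    by (intro graph_deriv_normal_attains_limit[OF blinfun_adjoint.bounded_linear_right t W \<mu>
          reg_normal_imp_lim_normal[OF reg]]) blast+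
  then obtain z where z: "z \<in> graph_deriv_normal D (g xb) \<eta> (gd xb u)" and "?A z = v"
    by blast
  then have "\<theta>0 *\<^sub>R xs = blinfun_adjoint (gdd xb u) \<eta> + ?A z"
    by (simp add: v_def)
  with z show "\<exists>z \<in> graph_deriv_normal D (g xb) \<eta> (gd xb u).
      \<theta>0 *\<^sub>R xs = blinfun_adjoint (gdd xb u) \<eta> + ?A z"
    by blast
qed

lemma asym_seq_limit_representation:
  fixes g :: "'a::euclidean_space \<Rightarrow> 'b::euclidean_space"
    and gd :: "'a \<Rightarrow> ('a \<Rightarrow>\<^sub>L 'b)" and gdd :: "'a \<Rightarrow> ('a \<Rightarrow>\<^sub>L ('a \<Rightarrow>\<^sub>L 'b))"
  assumes g: "\<And>x. (g has_derivative blinfun_apply (gd x)) (at x)"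
    and gd: "(gd has_derivative blinfun_apply (gdd xb)) (at xb)"
    and in_gph: "(xb, 0) \<in> gph_Phi g D"
    and Q1: "\<And>ys zs. blinfun_adjoint (gd xb) ys = 0 \<Longrightarrow>
        blinfun_adjoint (gdd xb u) ys + blinfun_adjoint (gd xb) zs = 0 \<Longrightarrow>
        ys \<in> dir_normal D (g xb) (gd xb u) \<Longrightarrow>
        zs \<in> graph_deriv_normal D (g xb) ys (gd xb u) \<Longrightarrow> ys = 0"
    and Q23: "(\<forall>ys zh. blinfun_adjoint (gd xb) ys = 0 \<longrightarrow> blinfun_adjoint (gd xb) zh = 0 \<longrightarrow>
                 ys \<in> dir_normal D (g xb) (gd xb u) \<longrightarrow>
                 zh \<in> graph_deriv_normal D (g xb) ys 0 \<longrightarrow> zh = 0)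
           \<or> (gd xb u \<noteq> 0 \<and>
              (\<forall>ys zh. blinfun_adjoint (gd xb) ys = 0 \<longrightarrow> blinfun_adjoint (gd xb) zh = 0 \<longrightarrow>
                 ys \<in> dir_normal D (g xb) (gd xb u) \<longrightarrow>
                 zh \<notin> Dsub_normal D (g xb) ys ((1 / norm (gd xb u)) *\<^sub>R gd xb u)))"
    and asym: "asym_seq (gph_Phi g D) xb u xk yk xsk lk xs ys"
  shows "\<exists>ys zs. xs = blinfun_adjoint (gdd xb u) ys + blinfun_adjoint (gd xb) zs
    \<and> ys \<in> dir_normal D (g xb) (gd xb u) \<and> blinfun_adjoint (gd xb) ys = 0
    \<and> zs \<in> graph_deriv_normal D (g xb) ys (gd xb u)"
proof -
  obtain t U W \<mu> \<theta> where t: "\<And>k. t k > 0" "t \<longlonglongrightarrow> 0" and "U \<longlonglongrightarrow> u" "W \<longlonglongrightarrow> gd xb u"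
    and reg: "\<And>k. \<mu> k \<in> reg_normal D (g xb + t k *\<^sub>R W k)" and \<mu>_le: "\<And>k. norm (\<mu> k) \<le> 1"
    and \<theta>_bounds: "\<And>k. 0 \<le> \<theta> k \<and> \<theta> k \<le> 1"
    and \<mu>_unit: "\<forall>\<^sub>F k in sequentially. \<theta> k < 1 \<longrightarrow> norm (\<mu> k) = 1"
    and xsk: "\<And>k. \<theta> k *\<^sub>R xsk k = (1 / t k) *\<^sub>R blinfun_adjoint (gd (xb + t k *\<^sub>R U k)) (\<mu> k)"
    using asym_seq_rescaled[OF g in_gph asym] by blast
  have "xsk \<longlonglongrightarrow> xs"
    using asym by (simp add: asym_seq_def)
  have "bounded (range \<mu>)" and "bounded (range \<theta>)"
    unfolding bounded_iff by (auto simp: \<mu>_le \<theta>_bounds abs_of_nonneg intro!: exI[of _ 1])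
  then obtain r \<eta> \<theta>0 where r: "strict_mono r"
    and \<mu>: "(\<lambda>k. \<mu> (r k)) \<longlonglongrightarrow> \<eta>" and \<theta>: "(\<lambda>k. \<theta> (r k)) \<longlonglongrightarrow> \<theta>0"
    by (rule convergent_subseq_Pair)
  have sub: "(\<lambda>k. f (r k)) \<longlonglongrightarrow> a" if "f \<longlonglongrightarrow> a" for f :: "nat \<Rightarrow> 'z::topological_space" and a
    using LIMSEQ_subseq_LIMSEQ[OF that r] by (simp add: o_def)
  note limit = rescaled_multiplier_limit
      [where g = g and gd = gd and gdd = gdd and xb = xb and D = D and u = u
         and t = "\<lambda>k. t (r k)" and U = "\<lambda>k. U (r k)" and W = "\<lambda>k. W (r k)"
         and \<mu> = "\<lambda>k. \<mu> (r k)" and \<theta> = "\<lambda>k. \<theta> (r k)" and xsk = "\<lambda>k. xsk (r k)",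
       OF gd t(1) sub[OF t(2)] sub[OF \<open>U \<longlonglongrightarrow> u\<close>] sub[OF \<open>W \<longlonglongrightarrow> gd xb u\<close>] \<mu> reg \<theta>
         sub[OF \<open>xsk \<longlonglongrightarrow> xs\<close>] xsk Q23]
  then obtain z where z: "z \<in> graph_deriv_normal D (g xb) \<eta> (gd xb u)"
    and xs: "\<theta>0 *\<^sub>R xs = blinfun_adjoint (gdd xb u) \<eta> + blinfun_adjoint (gd xb) z"
    by blast
  have "\<theta>0 \<ge> 0"
    using \<theta>_bounds by (intro LIMSEQ_le_const[OF \<theta>]) blast
  show ?thesis
  proof (cases "\<theta>0 = 0")
    case True
    have "\<forall>\<^sub>F k in sequentially. \<theta> (r k) < 1"
      using \<theta> True by (simp add: order_tendsto_iff)
    then have "\<forall>\<^sub>F k in sequentially. norm (\<mu> (r k)) = 1"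
      using eventually_subseq[OF r \<mu>_unit] by eventually_elim blast
    then have "norm \<eta> = 1"
      using LIMSEQ_unique[OF tendsto_norm[OF \<mu>] tendsto_eventually] by blast
    moreover have "\<eta> = 0"
      using Q1 limit(1,2) z xs True by simp
    ultimately show ?thesis
      by simp
  next
    case False
    with \<open>\<theta>0 \<ge> 0\<close> have "\<theta>0 > 0"
      by simp
    from this limit(1,2) z xs show ?thesis
      by (rule representation_of_scaled)
  qed
qed

lemma asym_regular_gph_PhiI:
  fixes g :: "'a::euclidean_space \<Rightarrow> 'b::euclidean_space"
  assumes g: "(g has_derivative blinfun_apply A) (at xb)"
    and rep: "\<And>xk yk xsk lk xs ys. asym_seq (gph_Phi g D) xb u xk yk xsk lk xs ys \<Longrightarrow>
      \<exists>l \<in> lim_normal D (g xb). xs = blinfun_adjoint A l"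
  shows "asym_regular (gph_Phi g D) xb u"
  unfolding asym_regular_def
proof (intro allI impI)
  fix xk yk xsk lk xs ys
  assume "asym_seq (gph_Phi g D) xb u xk yk xsk lk xs ys"
  then obtain l where "l \<in> lim_normal D (g xb)" and "xs = blinfun_adjoint A l"
    using rep by blast
  then have "xs \<in> lim_coderiv (gph_Phi g D) xb 0 l"
    using lim_normal_gph_Phi[OF g] by (simp add: lim_coderiv_def)
  then show "xs \<in> (\<Union>ys'. lim_coderiv (gph_Phi g D) xb 0 ys')"
    by blast
qed

lemma strong_asym_regular_gph_PhiI:
  fixes g :: "'a::euclidean_space \<Rightarrow> 'b::euclidean_space"
  assumes g: "\<And>x. (g has_derivative blinfun_apply (gd x)) (at x)" and "isCont gd xb"
    and rep: "\<And>xk yk xsk lk xs ys. asym_seq (gph_Phi g D) xb u xk yk xsk lk xs ys \<Longrightarrow>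
      \<exists>l \<in> dir_normal D (g xb) (gd xb u). xs = blinfun_adjoint (gd xb) l"
  shows "strong_asym_regular (gph_Phi g D) xb u"
  unfolding strong_asym_regular_def
proof (intro allI impI)
  fix xk yk xsk lk xs ys
  assume "asym_seq (gph_Phi g D) xb u xk yk xsk lk xs ys"
  then obtain l where "l \<in> dir_normal D (g xb) (gd xb u)" and "xs = blinfun_adjoint (gd xb) l"
    using rep by blast
  then have "xs \<in> dir_coderiv (gph_Phi g D) xb 0 u 0 l"
    using dir_normal_gph_Phi[OF g \<open>isCont gd xb\<close>] by (simp add: dir_coderiv_def)
  then show "xs \<in> (\<Union>ys'. dir_coderiv (gph_Phi g D) xb 0 u 0 ys')"
    by blast
qed

theorem theorem5p18:
  fixes g :: "'a::euclidean_space \<Rightarrow> 'b::euclidean_space"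
    and gd :: "'a \<Rightarrow> ('a \<Rightarrow>\<^sub>L 'b)"
    and gdd :: "'a \<Rightarrow> ('a \<Rightarrow>\<^sub>L ('a \<Rightarrow>\<^sub>L 'b))"
    and D :: "'b set" and xb u :: 'a
  assumes g_deriv: "\<And>x. (g has_derivative blinfun_apply (gd x)) (at x)"
    and gd_deriv: "\<And>x. (gd has_derivative blinfun_apply (gdd x)) (at x)"
    and gdd_cont: "continuous_on UNIV gdd"
    and D_closed: "closed D"
    and in_gph: "(xb, 0) \<in> gph_Phi g D"
    and u_unit: "norm u = 1"
    and Q1: "\<And>ys zs. adjoint (blinfun_apply (gd xb)) ys = 0 \<Longrightarrow>
        adjoint (blinfun_apply (blinfun_apply (gdd xb) u)) ys + adjoint (blinfun_apply (gd xb)) zs = 0 \<Longrightarrow>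
        ys \<in> dir_normal D (g xb) (gd xb u) \<Longrightarrow>
        zs \<in> graph_deriv_normal D (g xb) ys (gd xb u) \<Longrightarrow> ys = 0"
    and Q23: "(\<forall>ys zh. adjoint (blinfun_apply (gd xb)) ys = 0 \<longrightarrow>
                 adjoint (blinfun_apply (gd xb)) zh = 0 \<longrightarrow>
                 ys \<in> dir_normal D (g xb) (gd xb u) \<longrightarrow>
                 zh \<in> graph_deriv_normal D (g xb) ys 0 \<longrightarrow> zh = 0)
           \<or> (gd xb u \<noteq> 0 \<and>
              (\<forall>ys zh. adjoint (blinfun_apply (gd xb)) ys = 0 \<longrightarrow>
                 adjoint (blinfun_apply (gd xb)) zh = 0 \<longrightarrow>
                 ys \<in> dir_normal D (g xb) (gd xb u) \<longrightarrow>
                 zh \<notin> Dsub_normal D (g xb) ys ((1 / norm (gd xb u)) *\<^sub>R gd xb u)))"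
  shows "((\<forall>xs ys zs.
             xs = adjoint (blinfun_apply (blinfun_apply (gdd xb) u)) ys + adjoint (blinfun_apply (gd xb)) zs \<longrightarrow>
             ys \<in> dir_normal D (g xb) (gd xb u) \<longrightarrow>
             adjoint (blinfun_apply (gd xb)) ys = 0 \<longrightarrow>
             zs \<in> graph_deriv_normal D (g xb) ys (gd xb u) \<longrightarrow>
             (\<exists>lam\<in>lim_normal D (g xb). xs = adjoint (blinfun_apply (gd xb)) lam))
          \<longrightarrow> asym_regular (gph_Phi g D) xb u)
       \<and> ((\<forall>xs ys zs.
             xs = adjoint (blinfun_apply (blinfun_apply (gdd xb) u)) ys + adjoint (blinfun_apply (gd xb)) zs \<longrightarrow>
             ys \<in> dir_normal D (g xb) (gd xb u) \<longrightarrow>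
             adjoint (blinfun_apply (gd xb)) ys = 0 \<longrightarrow>
             zs \<in> graph_deriv_normal D (g xb) ys (gd xb u) \<longrightarrow>
             (\<exists>lam\<in>dir_normal D (g xb) (gd xb u). xs = adjoint (blinfun_apply (gd xb)) lam))
          \<longrightarrow> strong_asym_regular (gph_Phi g D) xb u)"
proof -
  have rep: "\<exists>ys zs. xs = blinfun_adjoint (gdd xb u) ys + blinfun_adjoint (gd xb) zs
      \<and> ys \<in> dir_normal D (g xb) (gd xb u) \<and> blinfun_adjoint (gd xb) ys = 0
      \<and> zs \<in> graph_deriv_normal D (g xb) ys (gd xb u)"
    if "asym_seq (gph_Phi g D) xb u xk yk xsk lk xs ys" for xk yk xsk lk xs ys
    using g_deriv gd_deriv in_gph Q1 Q23 that by (rule asym_seq_limit_representation)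
  have "isCont gd xb"
    using gd_deriv by (rule has_derivative_continuous)
  show ?thesis
    apply (intro conjI impI asym_regular_gph_PhiI[OF g_deriv]
        strong_asym_regular_gph_PhiI[OF g_deriv \<open>isCont gd xb\<close>])
    subgoal premises prems using rep[OF prems(2)] prems(1) by blast
    subgoal premises prems using rep[OF prems(2)] prems(1) by blast
    done
qed

end
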